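(* For all $m\in\mathbb{N}$, $\delta\in(0,1)$ and $\boldsymbol{\mu}\in\Delta_\mathbb{N}$, if $\boldsymbol{X}=(X_1,\dots,X_m)\sim\boldsymbol{\mu}^m$ and $\widehat{\boldsymbol{\mu}}_m$ is the empirical measure of $\boldsymbol{X}$, then with probability at least $1-\delta$, $$\|\widehat{\boldsymbol{\mu}}_m-\boldsymbol{\mu}\|_{TV}\le \Phi_m(\widehat{\boldsymbol{\mu}}_m)+3\sqrt{\frac{\log(2/\delta)}{2m}}.$$ Moreover, $\mathbb{E}\,\|\widehat{\boldsymbol{\mu}}_m-\boldsymbol{\mu}\|_{TV}\le \mathbb{E}\,\Phi_m(\widehat{\boldsymbol{\mu}}_m)$.
   Context: $\mathbb{N}=\{1,2,3,\dots\}$. $\Delta_\mathbb{N}$ is the set of probability distributions on $\mathbb{N}$, viewed as sequences $\boldsymbol{\mu}\in[0,1]^\mathbb{N}$ with $\sum_i\boldsymbol{\mu}(i)=1$. For $\boldsymbol{X}=(X_1,\dots,X_m)$ drawn i.i.d. from $\boldsymbol{\mu}$, the empirical measure is $\widehat{\boldsymbol{\mu}}_m(i)=\frac1m\sum_{t=1}^m\mathbb{I}\{X_t=i\}$. Total variation: $\|\boldsymbol{\mu}-\boldsymbol{\nu}\|_{TV}=\frac12\sum_{i\in\mathbb{N}}|\boldsymbol{\mu}(i)-\boldsymbol{\nu}(i)|$. The half-norm is $\|\boldsymbol{\mu}\|_{1/2}=\left(\sum_{i}\sqrt{\boldsymbol{\mu}(i)}\right)^2$ (possibly infinite). $\Phi_m(\widehat{\boldsymbol{\mu}}_m):=\frac{1}{\sqrt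 m}\|\widehat{\boldsymbol{\mu}}_m\|_{1/2}^{1/2}=\frac1{\sqrt m}\sum_{j\in\mathbb{N}}\sqrt{\widehat{\boldsymbol{\mu}}_m(j)}$. $\log$ is the natural logarithm. *)

theory Defs
  imports "HOL-Analysis.Analysis" "HOL-Probability.Probability"
begin

text \<open>Empirical measure of the sample X_0,...,X_{m-1} (the paper's X_1..X_m).\<close>
definition emp_measure :: "nat \<Rightarrow> (nat \<Rightarrow> nat) \<Rightarrow> nat \<Rightarrow> real" where
  "emp_measure m X i = real (card {t \<in> {..<m}. X t = i}) / real m"

definition tv_dist :: "(nat \<Rightarrow> real) \<Rightarrow> (nat \<Rightarrow> real) \<Rightarrow> real" where
  "tv_dist \<mu> \<nu> = (1/2) * (\<Sum>i. \<bar>\<mu> i - \<nu> i\<bar>)"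

definition Phi :: "nat \<Rightarrow> (nat \<Rightarrow> real) \<Rightarrow> real" where
  "Phi m \<nu> = (1 / sqrt (real m)) * (\<Sum>j. sqrt (\<nu> j))"

end

theory Submission
  imports Defs
begin

text \<open>
  Changing one sample point moves mass \<open>1/m\<close> between two atoms of the empirical measure, so
  both the total variation distance and \<open>\<Phi>\<^sub>m\<close> change by at most \<open>1/m\<close>; McDiarmid's
  inequality then concentrates each of them within \<open>\<surd>(log(2/\<delta>)/(2m))\<close> of its mean.
  The means are compared atom by atom: the count of an atom \<open>j\<close> is \<open>Binomial(m, \<mu>(j))\<close>,
  and for \<open>K \<sim> Binomial(n, p)\<close> one has \<open>E|K - np| \<le> 2 E\<surd>K\<close> (via the variance when
  \<open>np \<ge> 1\<close>, via \<open>P(K = 0)\<close> when \<open>np \<le> 1\<close>).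
\<close>

section \<open>McDiarmid's inequality for product distributions\<close>

lemma expectation_bind_pmf_bounded:
  fixes f :: "'b \<Rightarrow> real"
  assumes "\<And>y. \<bar>f y\<bar> \<le> B"
  shows "measure_pmf.expectation (bind_pmf M N) f =
         measure_pmf.expectation M (\<lambda>x. measure_pmf.expectation (N x) f)"
  unfolding measure_pmf_bind
  by (rule integral_bind[where K="count_space UNIV" and B=B and B'=1])
     (auto simp: assms space_subprob_algebra subprob_space_measure_pmf
           intro: measure_pmf.finite_measure_axioms)

lemma abs_expectation_pmf_le:
  fixes f :: "'a \<Rightarrow> real"
  assumes "\<And>x. \<bar>f x\<bar> \<le> B"
  shows "\<bar>measure_pmf.expectation M f\<bar> \<le> B"
proof -
  have "integrable M f"
    using assms by (intro measure_pmf.integrable_const_bound[where B=B]) auto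
  with assms show ?thesis
    unfolding abs_le_iff
    by (auto intro!: measure_pmf.integral_le_const measure_pmf.integral_ge_const simp: abs_le_iff minus_le_iff)
qed

lemma Pi_pmf_insert_bind:
  assumes "finite I" "i \<notin> I"
  shows "Pi_pmf (insert i I) d p = bind_pmf (p i) (\<lambda>y. map_pmf (\<lambda>X. X(i := y)) (Pi_pmf I d p))"
  using assms by (simp add: Pi_pmf_insert' map_pmf_def)

lemma expectation_Pi_pmf_insert:
  fixes f :: "('i \<Rightarrow> 'a) \<Rightarrow> real"
  assumes "finite I" "i \<notin> I" and "\<And>X. \<bar>f X\<bar> \<le> B"
  shows "measure_pmf.expectation (Pi_pmf (insert i I) d p) f =
         measure_pmf.expectation (p i) (\<lambda>y. measure_pmf.expectation (Pi_pmf I d p) (\<lambda>X. f (X(i := y))))"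
  unfolding Pi_pmf_insert_bind[OF assms(1,2)]
  by (subst expectation_bind_pmf_bounded[where B=B]) (simp_all add: assms)

lemma nn_integral_Pi_pmf_insert:
  assumes "finite I" "i \<notin> I"
  shows "(\<integral>\<^sup>+X. f X \<partial>Pi_pmf (insert i I) d p) = (\<integral>\<^sup>+y. \<integral>\<^sup>+X. f (X(i := y)) \<partial>Pi_pmf I d p \<partial>p i)"
  unfolding Pi_pmf_insert_bind[OF assms] by simp

lemma Hoeffdings_lemma_bounded_oscillation:
  fixes h :: "'a \<Rightarrow> real" and Q :: "'a pmf" and l c :: real
  assumes "l > 0" "\<And>y y'. h y \<le> h y' + c" "\<And>y. \<bar>h y\<bar> \<le> B"
  shows "(\<integral>\<^sup>+y. exp (l * (h y - measure_pmf.expectation Q h)) \<partial>Q) \<le> exp (l\<^sup>2 * c\<^sup>2 / 8)"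
proof -
  have "- B \<le> h y" for y
    using assms(3)[of y] by linarith
  then have "bdd_below (range h)"
    by (intro bdd_belowI[of _ "- B"]) auto
  then have "Inf (range h) \<le> h y" for y
    by (intro cInf_lower) auto
  moreover have "h y \<le> Inf (range h) + c" for y
  proof -
    have "h y - c \<le> Inf (range h)"
      by (rule cInf_greatest) (use assms(2) in \<open>auto simp: algebra_simps\<close>)
    then show ?thesis by simp
  qed
  ultimately interpret interval_bounded_random_variable "measure_pmf Q" h "Inf (range h)" "Inf (range h) + c"
    by unfold_locales auto
  show ?thesis
    using Hoeffdings_lemma_nn_integral[OF assms(1)] by simp
qed

lemma expectation_fun_upd_le:
  fixes f :: "('i \<Rightarrow> 'a) \<Rightarrow> real"
  assumes "\<And>X y. \<bar>f (X(i := y)) - f X\<bar> \<le> c" "\<And>X. \<bar>f X\<bar> \<le> B"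
  shows "measure_pmf.expectation M (\<lambda>X. f (X(i := y))) \<le> measure_pmf.expectation M (\<lambda>X. f (X(i := y'))) + c"
proof -
  have integrable: "integrable M (\<lambda>X. f (X(i := z)))" for z
    using assms(2) by (intro measure_pmf.integrable_const_bound[where B=B]) auto
  have "f (X(i := y)) \<le> f (X(i := y')) + c" for X
  proof -
    have "\<bar>f (X(i := y)) - f (X(i := y'))\<bar> \<le> c"
      using assms(1)[of "X(i := y')" y] by (simp only: fun_upd_upd)
    then show ?thesis by linarith
  qed
  then have "measure_pmf.expectation M (\<lambda>X. f (X(i := y))) \<le> measure_pmf.expectation M (\<lambda>X. f (X(i := y')) + c)"
    by (intro integral_mono integrable Bochner_Integration.integrable_add) auto
  then show ?thesis
    by (simp add: integrable)
qed

lemma mgf_bounded_differences_Pi_pmf: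
  fixes f :: "('i \<Rightarrow> 'a) \<Rightarrow> real" and p :: "'i \<Rightarrow> 'a pmf" and l c :: real
  assumes "finite I" "l > 0"
    and "\<And>X i y. i \<in> I \<Longrightarrow> \<bar>f (X(i := y)) - f X\<bar> \<le> c"
    and "\<And>X. \<bar>f X\<bar> \<le> B"
  shows "(\<integral>\<^sup>+X. exp (l * (f X - measure_pmf.expectation (Pi_pmf I d p) f)) \<partial>Pi_pmf I d p)
          \<le> exp (l\<^sup>2 * c\<^sup>2 * card I / 8)"
  using assms(1,3,4)
proof (induction I arbitrary: f rule: finite_induct)
  case empty
  then show ?case by simp
next
  case (insert i I f)
  let ?M = "Pi_pmf I d p" and ?K = "exp (l\<^sup>2 * c\<^sup>2 * card I / 8)"
  define h where "h y = measure_pmf.expectation ?M (\<lambda>X. f (X(i := y)))" for y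
  define F where "F = measure_pmf.expectation (Pi_pmf (insert i I) d p) f"
  have F_eq: "F = measure_pmf.expectation (p i) h"
    unfolding F_def h_def by (rule expectation_Pi_pmf_insert) (use insert in auto)
  \<comment> \<open>Conditioning on coordinate \<open>i\<close>: the conditional mean \<open>h\<close> oscillates by at most \<open>c\<close>, so
    Hoeffding's lemma controls it, and the induction hypothesis controls \<open>f\<close> around \<open>h\<close>.\<close>
  have Hoeffding: "(\<integral>\<^sup>+y. exp (l * (h y - F)) \<partial>p i) \<le> exp (l\<^sup>2 * c\<^sup>2 / 8)"
    unfolding F_eq
  proof (rule Hoeffdings_lemma_bounded_oscillation[OF \<open>l > 0\<close>])
    show "h y \<le> h y' + c" for y y'
      unfolding h_def by (rule expectation_fun_upd_le) (use insert.prems in auto)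
    show "\<bar>h y\<bar> \<le> B" for y
      unfolding h_def by (rule abs_expectation_pmf_le) (use insert.prems in auto)
  qed
  have IH: "(\<integral>\<^sup>+X. exp (l * (f (X(i := y)) - h y)) \<partial>?M) \<le> ?K" for y
    unfolding h_def
  proof (rule insert.IH)
    show "\<bar>f ((X(j := z))(i := y)) - f (X(i := y))\<bar> \<le> c" if "j \<in> I" for X j z
    proof -
      have "X(j := z, i := y) = (X(i := y))(j := z)"
        using that insert.hyps by (auto simp: fun_eq_iff)
      then show ?thesis
        using insert.prems(1)[of j "X(i := y)" z] that by (simp only: insert_iff simp_thms)
    qed
  qed (rule insert.prems(2))
  have "(\<integral>\<^sup>+X. exp (l * (f X - F)) \<partial>Pi_pmf (insert i I) d p)
      = (\<integral>\<^sup>+y. ennreal (exp (l * (h y - F))) * (\<integral>\<^sup>+X. exp (l * (f (X(i := y)) - h y)) \<partial>?M) \<partial>p i)"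
    unfolding nn_integral_Pi_pmf_insert[OF insert.hyps]
    by (intro nn_integral_cong, subst nn_integral_cmult[symmetric])
       (auto simp: ennreal_mult[symmetric] exp_add[symmetric] algebra_simps intro!: nn_integral_cong)
  also have "\<dots> \<le> (\<integral>\<^sup>+y. ennreal (exp (l * (h y - F))) * ?K \<partial>p i)"
    by (intro nn_integral_mono mult_left_mono IH) auto
  also have "\<dots> = (\<integral>\<^sup>+y. exp (l * (h y - F)) \<partial>p i) * ?K"
    by (rule nn_integral_multc) auto
  also have "\<dots> \<le> ennreal (exp (l\<^sup>2 * c\<^sup>2 / 8)) * ?K"
    by (intro mult_right_mono Hoeffding) auto
  also have "\<dots> = exp (l\<^sup>2 * c\<^sup>2 * card (insert i I) / 8)"
    using insert.hyps by (simp add: ennreal_mult[symmetric] exp_add[symmetric] field_simps)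
  finally show ?case unfolding F_def .
qed

theorem mcdiarmid_Pi_pmf:
  fixes f :: "('i \<Rightarrow> 'a) \<Rightarrow> real" and p :: "'i \<Rightarrow> 'a pmf" and c s :: real
  assumes "finite I" "I \<noteq> {}" "c > 0" "s > 0"
    and "\<And>X i y. i \<in> I \<Longrightarrow> \<bar>f (X(i := y)) - f X\<bar> \<le> c"
    and "\<And>X. \<bar>f X\<bar> \<le> B"
  shows "measure_pmf.prob (Pi_pmf I d p) {X. f X - measure_pmf.expectation (Pi_pmf I d p) f \<ge> s}
           \<le> exp (-2 * s\<^sup>2 / (card I * c\<^sup>2))"
proof -
  let ?P = "Pi_pmf I d p"
  let ?E = "measure_pmf.expectation ?P f"
  define n where "n = real (card I)"
  have "n > 0"
    using assms(1,2) by (simp add: n_def card_gt_0_iff)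
  \<comment> \<open>the minimiser of the Chernoff exponent \<open>- l s + l\<^sup>2 c\<^sup>2 n / 8\<close>\<close>
  define l where "l = 4 * s / (n * c\<^sup>2)"
  have "l > 0"
    using \<open>n > 0\<close> assms(3,4) by (simp add: l_def)
  have "emeasure ?P {X \<in> UNIV. f X - ?E \<ge> s} \<le>
      ennreal (exp (-l * s)) * (\<integral>\<^sup>+X. ennreal (exp (l * (f X - ?E))) * indicator UNIV X \<partial>?P)"
    by (rule Chernoff_ineq_nn_integral_ge) (use \<open>l > 0\<close> in auto)
  also have "\<dots> \<le> ennreal (exp (-l * s)) * ennreal (exp (l\<^sup>2 * c\<^sup>2 * n / 8))"
    unfolding n_def using mgf_bounded_differences_Pi_pmf[OF assms(1) \<open>l > 0\<close> assms(5,6)]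
    by (intro mult_left_mono) auto
  also have "\<dots> = ennreal (exp (-2 * s\<^sup>2 / (n * c\<^sup>2)))"
  proof -
    have "-l * s + l\<^sup>2 * c\<^sup>2 * n / 8 = -2 * s\<^sup>2 / (n * c\<^sup>2)"
      using \<open>n > 0\<close> assms(3) by (simp add: l_def field_simps power2_eq_square)
    then show ?thesis by (simp add: ennreal_mult[symmetric] exp_add[symmetric])
  qed
  finally show ?thesis
    unfolding n_def by (simp add: measure_pmf.emeasure_eq_measure)
qed

section \<open>The empirical measure\<close>

lemma summable_pmf_nat: "summable (pmf (\<mu> :: nat pmf))"
  and suminf_pmf_nat_le_1: "suminf (pmf \<mu>) \<le> 1"
proof -
  have partial_sums: "(\<Sum>i<n. pmf \<mu> i) \<le> 1" for n
    using measure_measure_pmf_finite[of "{..<n}" \<mu>] measure_pmf.prob_le_1[of \<mu> "{..<n}"] by simp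
  show "summable (pmf \<mu>)"
    by (rule summableI_nonneg_bounded[OF pmf_nonneg partial_sums])
  then show "suminf (pmf \<mu>) \<le> 1"
    by (rule suminf_le_const[OF _ partial_sums])
qed

lemma suminf_diff_two_points:
  fixes a b :: "nat \<Rightarrow> real"
  assumes "summable a" "summable b" "u \<noteq> v" "\<And>j. j \<noteq> u \<Longrightarrow> j \<noteq> v \<Longrightarrow> a j = b j"
  shows "suminf a - suminf b = (a u - b u) + (a v - b v)"
proof -
  have "suminf a - suminf b = (\<Sum>j. a j - b j)"
    using suminf_diff[OF assms(1,2)] by simp
  also have "\<dots> = (\<Sum>j\<in>{u, v}. a j - b j)"
    by (rule suminf_finite) (use assms in auto)
  finally show ?thesis
    using assms(3) by simp
qed

lemma emp_measure_nonneg: "emp_measure m X j \<ge> 0"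
  unfolding emp_measure_def by simp

lemma emp_measure_le_1: "emp_measure m X j \<le> 1"
proof -
  have "card {t \<in> {..<m}. X t = j} \<le> m"
    using card_mono[of "{..<m}" "{t \<in> {..<m}. X t = j}"] by auto
  then show ?thesis
    unfolding emp_measure_def by (cases "m = 0") (auto simp: field_simps)
qed

lemma emp_measure_eq_0: "j \<notin> X ` {..<m} \<Longrightarrow> emp_measure m X j = 0"
  unfolding emp_measure_def by (auto simp: image_iff)

lemma summable_comp_emp_measure: "g 0 = 0 \<Longrightarrow> summable (\<lambda>j. g (emp_measure m X j))"
  by (rule summable_finite[of "X ` {..<m}"]) (auto simp: emp_measure_eq_0)

lemma summable_emp_measure: "summable (emp_measure m X)"
  using summable_comp_emp_measure[of "\<lambda>x. x" m X] by simp

lemma suminf_emp_measure: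
  assumes "m > 0"
  shows "suminf (emp_measure m X) = 1"
proof -
  have "real m = real (\<Sum>j\<in>X ` {..<m}. card {t \<in> {..<m}. X t = j})"
    using sum.image_gen[of "{..<m}" "\<lambda>_. (1::nat)" X] by simp
  then have "(\<Sum>j\<in>X ` {..<m}. emp_measure m X j) = 1"
    using assms unfolding emp_measure_def by (simp add: sum_divide_distrib[symmetric])
  then show ?thesis
    by (subst suminf_finite[of "X ` {..<m}"]) (auto simp: emp_measure_eq_0)
qed

lemma emp_measure_fun_upd:
  assumes "i < m" "X i \<noteq> y"
  shows "\<And>j. j \<noteq> X i \<Longrightarrow> j \<noteq> y \<Longrightarrow> emp_measure m (X(i := y)) j = emp_measure m X j"
    and "emp_measure m (X(i := y)) (X i) = emp_measure m X (X i) - 1 / m"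
    and "emp_measure m (X(i := y)) y = emp_measure m X y + 1 / m"
proof -
  show "emp_measure m (X(i := y)) j = emp_measure m X j" if "j \<noteq> X i" "j \<noteq> y" for j
  proof -
    have "{t \<in> {..<m}. (X(i := y)) t = j} = {t \<in> {..<m}. X t = j}"
      using that by auto
    then show ?thesis unfolding emp_measure_def by simp
  qed
  let ?A = "{t \<in> {..<m}. X t = X i}"
  have "{t \<in> {..<m}. (X(i := y)) t = X i} = ?A - {i}" "i \<in> ?A"
    using assms by auto
  then have "real (card {t \<in> {..<m}. (X(i := y)) t = X i}) = real (card ?A) - 1"
    using card.remove[of ?A i] by (simp only:) simp
  then show "emp_measure m (X(i := y)) (X i) = emp_measure m X (X i) - 1 / m"
    unfolding emp_measure_def by (simp add: diff_divide_distrib)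
  have "{t \<in> {..<m}. (X(i := y)) t = y} = insert i {t \<in> {..<m}. X t = y}"
    and "i \<notin> {t \<in> {..<m}. X t = y}"
    using assms by auto
  then show "emp_measure m (X(i := y)) y = emp_measure m X y + 1 / m"
    unfolding emp_measure_def by (simp add: add_divide_distrib)
qed

lemma summable_abs_emp_measure_diff: "summable (\<lambda>j. \<bar>emp_measure m X j - pmf \<mu> j\<bar>)"
proof (rule summable_rabs_comparison_test)
  show "\<exists>N. \<forall>j\<ge>N. \<bar>emp_measure m X j - pmf \<mu> j\<bar> \<le> emp_measure m X j + pmf \<mu> j"
    using emp_measure_nonneg[of m X] pmf_nonneg[of \<mu>] by (auto simp: abs_le_iff)
  show "summable (\<lambda>j. emp_measure m X j + pmf \<mu> j)"
    by (intro summable_add summable_emp_measure summable_pmf_nat)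
qed

lemma summable_sqrt_emp_measure: "summable (\<lambda>j. sqrt (emp_measure m X j))"
  using summable_comp_emp_measure[of sqrt m X] by simp

lemma tv_dist_emp_measure_bounded:
  assumes "m > 0"
  shows "\<bar>tv_dist (emp_measure m X) (pmf \<mu>)\<bar> \<le> 1"
proof -
  have "(\<Sum>j. \<bar>emp_measure m X j - pmf \<mu> j\<bar>) \<le> (\<Sum>j. emp_measure m X j + pmf \<mu> j)"
    using emp_measure_nonneg[of m X] pmf_nonneg[of \<mu>]
    by (intro suminf_le summable_abs_emp_measure_diff summable_add summable_emp_measure summable_pmf_nat)
       (auto simp: abs_le_iff)
  also have "\<dots> = suminf (emp_measure m X) + suminf (pmf \<mu>)"
    by (intro suminf_add[symmetric] summable_emp_measure summable_pmf_nat)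
  also have "\<dots> \<le> 2"
    using suminf_emp_measure[OF assms] suminf_pmf_nat_le_1[of \<mu>] by simp
  finally show ?thesis
    using suminf_nonneg[OF summable_abs_emp_measure_diff, of m X \<mu>] by (simp add: tv_dist_def)
qed

lemma Phi_emp_measure_nonneg: "Phi m (emp_measure m X) \<ge> 0"
  unfolding Phi_def
  by (intro mult_nonneg_nonneg suminf_nonneg summable_sqrt_emp_measure) (auto simp: emp_measure_nonneg)

lemma Phi_emp_measure_le: "Phi m (emp_measure m X) \<le> sqrt m"
proof (cases "m = 0")
  case False
  have "(\<Sum>j. sqrt (emp_measure m X j)) = (\<Sum>j\<in>X ` {..<m}. sqrt (emp_measure m X j))"
    by (rule suminf_finite) (auto simp: emp_measure_eq_0)
  also have "\<dots> \<le> card (X ` {..<m})"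
    using sum_mono[of "X ` {..<m}" "\<lambda>j. sqrt (emp_measure m X j)" "\<lambda>_. 1"]
    by (simp add: emp_measure_le_1)
  also have "\<dots> \<le> m"
    using card_image_le[of "{..<m}" X] by simp
  finally have "(\<Sum>j. sqrt (emp_measure m X j)) / sqrt m \<le> m / sqrt m"
    by (simp add: divide_right_mono)
  then show ?thesis
    using False by (simp add: Phi_def real_div_sqrt)
qed (simp add: Phi_def)

lemma tv_dist_emp_measure_fun_upd:
  assumes "i < m"
  shows "\<bar>tv_dist (emp_measure m (X(i := y))) (pmf \<mu>) - tv_dist (emp_measure m X) (pmf \<mu>)\<bar> \<le> 1 / m"
proof (cases "X i = y")
  case False
  let ?e = "emp_measure m X" and ?e' = "emp_measure m (X(i := y))"
  have "(\<Sum>j. \<bar>?e' j - pmf \<mu> j\<bar>) - (\<Sum>j. \<bar>?e j - pmf \<mu> j\<bar>)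
     = (\<bar>?e' (X i) - pmf \<mu> (X i)\<bar> - \<bar>?e (X i) - pmf \<mu> (X i)\<bar>) + (\<bar>?e' y - pmf \<mu> y\<bar> - \<bar>?e y - pmf \<mu> y\<bar>)"
    using emp_measure_fun_upd(1)[of i m X y, OF assms False] False
    by (intro suminf_diff_two_points summable_abs_emp_measure_diff) auto
  also have "\<bar>\<dots>\<bar> \<le> 2 / m"
  proof -
    have shift: "\<bar>\<bar>x + d - q\<bar> - \<bar>x - q\<bar>\<bar> \<le> \<bar>d\<bar>" for x d q :: real
      using abs_triangle_ineq3[of "x + d - q" "x - q"] by simp
    show ?thesis
      unfolding emp_measure_fun_upd(2,3)[of i m X y, OF assms False]
      using add_mono[OF shift[of "?e (X i)" "- 1 / m" "pmf \<mu> (X i)"] shift[of "?e y" "1 / m" "pmf \<mu> y"]]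
      by (intro order.trans[OF abs_triangle_ineq]) simp
  qed
  finally show ?thesis
    unfolding tv_dist_def by (simp add: right_diff_distrib[symmetric] abs_mult)
qed (simp add: fun_upd_idem)

lemma Phi_emp_measure_fun_upd:
  assumes "i < m"
  shows "\<bar>Phi m (emp_measure m (X(i := y))) - Phi m (emp_measure m X)\<bar> \<le> 1 / m"
proof (cases "X i = y")
  case False
  let ?e = "emp_measure m X" and ?e' = "emp_measure m (X(i := y))"
  have "m > 0" using assms by simp
  have "(\<Sum>j. sqrt (?e' j)) - (\<Sum>j. sqrt (?e j))
     = (sqrt (?e' (X i)) - sqrt (?e (X i))) + (sqrt (?e' y) - sqrt (?e y))"
    using emp_measure_fun_upd(1)[of i m X y, OF assms False] False
    by (intro suminf_diff_two_points summable_sqrt_emp_measure) auto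
  also have "\<bar>\<dots>\<bar> \<le> sqrt (1 / m)"
  proof -
    have sqrt_le: "sqrt x \<le> sqrt (x + 1 / m)" for x
      by simp
    have sqrt_add_le: "sqrt (x + 1 / m) \<le> sqrt x + sqrt (1 / m)" if "x \<ge> 0" for x
      using sqrt_add_le_add_sqrt[OF that, of "1 / m"] by simp
    have e_Xi: "?e (X i) = ?e' (X i) + 1 / m"
      using emp_measure_fun_upd(2)[of i m X y, OF assms False] by simp
    show ?thesis
      unfolding e_Xi emp_measure_fun_upd(3)[of i m X y, OF assms False] abs_le_iff
      using sqrt_le[of "?e' (X i)"] sqrt_le[of "?e y"]
        sqrt_add_le[OF emp_measure_nonneg[of m "X(i := y)" "X i"]] sqrt_add_le[OF emp_measure_nonneg[of m X y]]
      by (intro conjI; linarith)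
  qed
  finally have "\<bar>(\<Sum>j. sqrt (?e' j)) - (\<Sum>j. sqrt (?e j))\<bar> / sqrt m \<le> sqrt (1 / m) / sqrt m"
    by (rule divide_right_mono) simp
  then show ?thesis
    using \<open>m > 0\<close> by (simp add: Phi_def diff_divide_distrib[symmetric] abs_divide real_sqrt_divide)
qed (simp add: fun_upd_idem)

section \<open>Mean absolute deviation of the binomial distribution\<close>

lemma expectation_binomial_pmf_Suc:
  fixes f :: "nat \<Rightarrow> real"
  assumes "p \<in> {0..1}"
  shows "measure_pmf.expectation (binomial_pmf (Suc n) p) f =
         (1 - p) * measure_pmf.expectation (binomial_pmf n p) f +
         p * measure_pmf.expectation (binomial_pmf n p) (\<lambda>k. f (Suc k))"
  using assms unfolding binomial_pmf_Suc[OF assms]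
  by (subst pmf_expectation_bind[where A=UNIV])
     (auto simp: map_pmf_def[symmetric] finite_set_pmf_binomial_pmf UNIV_bool)

lemma
  assumes "p \<in> {0..1}"
  shows expectation_binomial_pmf_real: "measure_pmf.expectation (binomial_pmf n p) real = n * p"
    and expectation_binomial_pmf_real_square:
      "measure_pmf.expectation (binomial_pmf n p) (\<lambda>k. (real k)\<^sup>2) = n * p * (1 - p) + (n * p)\<^sup>2"
proof (induction n)
  case 0
  { case 1 show ?case using assms by (simp add: binomial_pmf_0) }
  { case 2 show ?case using assms by (simp add: binomial_pmf_0) }
next
  case (Suc n)
  have shift: "measure_pmf.expectation (binomial_pmf n p) (\<lambda>k. real (Suc k)) = n * p + 1"
    using Suc.IH(1) assms by (simp add: Bochner_Integration.integral_add)
  have "(\<lambda>k. (real (Suc k))\<^sup>2) = (\<lambda>k. (real k)\<^sup>2 + (2 * real k + 1))"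
    by (auto simp: power2_eq_square algebra_simps)
  then have shift_square: "measure_pmf.expectation (binomial_pmf n p) (\<lambda>k. (real (Suc k))\<^sup>2) =
      n * p * (1 - p) + (n * p)\<^sup>2 + 2 * (n * p) + 1"
    using Suc.IH assms by (simp add: Bochner_Integration.integral_add)
  { case 1 show ?case
      unfolding expectation_binomial_pmf_Suc[OF assms] Suc.IH(1) shift by (simp add: algebra_simps) }
  { case 2 show ?case
      unfolding expectation_binomial_pmf_Suc[OF assms] Suc.IH(2) shift_square
      by (simp add: algebra_simps power2_eq_square) }
qed

lemma expectation_binomial_pmf_quadratic:
  assumes "p \<in> {0..1}"
  shows "measure_pmf.expectation (binomial_pmf n p) (\<lambda>k. a * (real k)\<^sup>2 + b * real k + c) =
         a * (n * p * (1 - p) + (n * p)\<^sup>2) + b * (n * p) + c"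
  using assms
  by (simp add: Bochner_Integration.integral_add expectation_binomial_pmf_real
                expectation_binomial_pmf_real_square)

text \<open>The quadratic minorant of \<open>\<surd>x\<close> on \<open>x \<ge> 0\<close> that touches it at \<open>x = L\<close>.\<close>

lemma sqrt_ge_quadratic:
  assumes "x \<ge> 0" "L > 0"
  shows "x * (3 * L - x) / (2 * L * sqrt L) \<le> sqrt x"
proof -
  define s q where "s = sqrt x" and "q = sqrt L"
  have s: "x = s\<^sup>2" "s \<ge> 0" and q: "L = q\<^sup>2" "q > 0"
    using assms by (simp_all add: s_def q_def)
  have "s * (2 * q\<^sup>2 * q) - s\<^sup>2 * (3 * q\<^sup>2 - s\<^sup>2) = s * ((s - q)\<^sup>2 * (s + 2 * q))"
    by (simp add: power2_eq_square algebra_simps)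
  also have "\<dots> \<ge> 0"
    using s q by simp
  finally have "s\<^sup>2 * (3 * q\<^sup>2 - s\<^sup>2) \<le> s * (2 * q\<^sup>2 * q)"
    by simp
  then show ?thesis
    unfolding s q using q s(2) by (simp add: divide_le_eq mult.commute)
qed

lemma expectation_binomial_abs_dev_le_sqrt_mean:
  fixes p :: real
  assumes "p \<in> {0..1}" "n * p > 0"
  shows "measure_pmf.expectation (binomial_pmf n p) (\<lambda>k. \<bar>real k - n * p\<bar>) \<le> sqrt (n * p)"
proof -
  define L where "L = n * p"
  define q where "q = sqrt L"
  have q: "q > 0" "q\<^sup>2 = L"
    using assms by (simp_all add: q_def L_def)
  have "measure_pmf.expectation (binomial_pmf n p) (\<lambda>k. \<bar>real k - L\<bar>) \<le>
        measure_pmf.expectation (binomial_pmf n p) (\<lambda>k. (1 / (2*q)) * (real k)\<^sup>2 + (- L / q) * real k + (L\<^sup>2 / (2*q) + q / 2))"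
  proof (intro integral_mono)
    fix k :: nat
    have "2 * q * \<bar>real k - L\<bar> \<le> (real k - L)\<^sup>2 + q\<^sup>2"
      using sum_squares_bound[of "\<bar>real k - L\<bar>" q] by (simp add: power2_eq_square algebra_simps)
    then have "\<bar>real k - L\<bar> \<le> ((real k - L)\<^sup>2 + q\<^sup>2) / (2 * q)"
      using q by (simp add: le_divide_eq mult.commute)
    also have "\<dots> = (1 / (2*q)) * (real k)\<^sup>2 + (- L / q) * real k + (L\<^sup>2 / (2*q) + q / 2)"
      using q by (simp add: field_simps power2_eq_square)
    finally show "\<bar>real k - L\<bar> \<le> \<dots>" .
  qed (use assms in auto)
  also have "\<dots> = L * (1 - p) / (2*q) + q / 2"
    unfolding expectation_binomial_pmf_quadratic[OF assms(1)] L_def[symmetric]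
    using q by (simp add: field_simps power2_eq_square)
  also have "\<dots> \<le> L / (2*q) + q / 2"
    using q assms by (intro add_right_mono divide_right_mono mult_left_le) (auto simp: L_def)
  also have "\<dots> = q"
    using q by (simp add: field_simps power2_eq_square)
  finally show ?thesis unfolding q_def L_def .
qed

lemma sqrt_mean_le_expectation_sqrt_binomial:
  fixes p :: real
  assumes "p \<in> {0..1}" "n * p \<ge> 1"
  shows "sqrt (n * p) \<le> 2 * measure_pmf.expectation (binomial_pmf n p) (\<lambda>k. sqrt (real k))"
proof -
  define L where "L = n * p"
  define q where "q = sqrt L"
  have q: "q > 0" "q\<^sup>2 = L"
    using assms by (simp_all add: q_def L_def)
  have "q \<le> (2 * L - 1) / q"
    using q assms by (simp add: le_divide_eq power2_eq_square L_def) (simp add: mult.commute)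
  also have "\<dots> \<le> (2 * L - (1 - p)) / q"
    using q assms by (intro divide_right_mono) auto
  also have "\<dots> = 2 * measure_pmf.expectation (binomial_pmf n p)
                         (\<lambda>k. (- 1 / (2 * L * q)) * (real k)\<^sup>2 + (3 * L / (2 * L * q)) * real k + 0)"
    unfolding expectation_binomial_pmf_quadratic[OF assms(1)] L_def[symmetric]
    using q by (auto simp: field_simps power2_eq_square)
  also have "\<dots> \<le> 2 * measure_pmf.expectation (binomial_pmf n p) (\<lambda>k. sqrt (real k))"
  proof (intro mult_left_mono integral_mono)
    fix k :: nat
    have "real k * (3 * L - real k) / (2 * L * q) \<le> sqrt (real k)"
      unfolding q_def using assms by (intro sqrt_ge_quadratic) (auto simp: L_def)
    moreover have "L > 0"
      using assms by (simp add: L_def)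
    ultimately show "(- 1 / (2 * L * q)) * (real k)\<^sup>2 + (3 * L / (2 * L * q)) * real k + 0 \<le> sqrt (real k)"
      using q by (simp add: field_simps power2_eq_square)
  qed (use assms in auto)
  finally show ?thesis
    unfolding q_def L_def .
qed

lemma expectation_binomial_abs_dev_small_mean:
  fixes p :: real
  assumes "p \<in> {0..1}" "n * p \<le> 1"
  shows "measure_pmf.expectation (binomial_pmf n p) (\<lambda>k. \<bar>real k - n * p\<bar>)
         \<le> 2 * measure_pmf.expectation (binomial_pmf n p) (\<lambda>k. sqrt (real k))"
proof -
  let ?E = "measure_pmf.expectation (binomial_pmf n p)"
  define L where "L = n * p"
  define z where "z = (1 - p) ^ n"
  have integrable: "integrable (binomial_pmf n p) f" for f :: "nat \<Rightarrow> real"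
    using assms(1) by simp
  have prob_0: "?E (\<lambda>k. of_bool (k = 0)) = z"
    using assms(1) by (subst integral_measure_pmf_real[of "{0}"]) (auto simp: z_def)
  \<comment> \<open>since \<open>L \<le> 1 \<le> k\<close> unless \<open>k = 0\<close>\<close>
  have "?E (\<lambda>k. \<bar>real k - L\<bar>) = ?E (\<lambda>k. real k - L + 2 * L * of_bool (k = 0))"
    using assms by (intro Bochner_Integration.integral_cong) (auto simp: L_def)
  also have "\<dots> = 2 * L * z"
    using assms(1) prob_0
    by (simp add: Bochner_Integration.integral_add Bochner_Integration.integral_diff integrable
                  expectation_binomial_pmf_real L_def)
  also have "\<dots> \<le> 2 * (1 - z)"
  proof -
    have "1 + L \<le> (1 + p) ^ n"
      unfolding L_def using Bernoulli_inequality[of p n] assms(1) by simp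
    then have "z * (1 + L) \<le> z * (1 + p) ^ n"
      using assms(1) by (intro mult_left_mono) (auto simp: z_def)
    also have "\<dots> = (1 - p\<^sup>2) ^ n"
      by (simp add: z_def power_mult_distrib[symmetric] power2_eq_square algebra_simps)
    also have "\<dots> \<le> 1"
      using assms(1) by (intro power_le_one) (auto simp: power_le_one)
    finally show ?thesis by (simp add: algebra_simps)
  qed
  also have "\<dots> = 2 * ?E (\<lambda>k. 1 - of_bool (k = 0))"
    using prob_0 by (simp add: Bochner_Integration.integral_diff integrable)
  also have "\<dots> \<le> 2 * ?E (\<lambda>k. sqrt (real k))"
    by (intro mult_left_mono integral_mono integrable) auto
  finally show ?thesis
    unfolding L_def .
qed

lemma expectation_binomial_abs_dev_le:
  fixes p :: real
  assumes "p \<in> {0..1}"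
  shows "measure_pmf.expectation (binomial_pmf n p) (\<lambda>k. \<bar>real k - n * p\<bar>)
         \<le> 2 * measure_pmf.expectation (binomial_pmf n p) (\<lambda>k. sqrt (real k))"
proof (cases "n * p \<ge> 1")
  case True
  then show ?thesis
    using expectation_binomial_abs_dev_le_sqrt_mean[OF assms, of n]
      sqrt_mean_le_expectation_sqrt_binomial[OF assms True] by simp
qed (use expectation_binomial_abs_dev_small_mean[OF assms] in simp)

section \<open>Expected total variation of the empirical measure\<close>

lemma map_pmf_mem_eq_bernoulli_pmf:
  "map_pmf (\<lambda>x. x \<in> A) \<mu> = bernoulli_pmf (measure_pmf.prob \<mu> A)"
proof (rule pmf_eqI)
  fix b :: bool
  have "(\<lambda>x. x \<in> A) -` {b} = (if b then A else - A)"
    by auto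
  then show "pmf (map_pmf (\<lambda>x. x \<in> A) \<mu>) b = pmf (bernoulli_pmf (measure_pmf.prob \<mu> A)) b"
    using measure_pmf.prob_compl[of A \<mu>] by (simp add: pmf_map Compl_eq_Diff_UNIV)
qed

lemma count_Pi_pmf_eq_binomial_pmf:
  assumes "finite I"
  shows "map_pmf (\<lambda>X. card {t \<in> I. X t = j}) (Pi_pmf I d (\<lambda>_. \<mu>)) = binomial_pmf (card I) (pmf \<mu> j)"
proof -
  have "map_pmf (\<lambda>x. x = j) \<mu> = bernoulli_pmf (pmf \<mu> j)"
    using map_pmf_mem_eq_bernoulli_pmf[of "{j}" \<mu>] by (simp add: measure_pmf_single)
  then have "binomial_pmf (card I) (pmf \<mu> j) =
        map_pmf (\<lambda>B. card {t \<in> I. B t}) (Pi_pmf I (d = j) (\<lambda>_. map_pmf (\<lambda>x. x = j) \<mu>))"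
    using assms by (simp add: binomial_pmf_altdef' pmf_le_1)
  also have "\<dots> = map_pmf (\<lambda>X. card {t \<in> I. X t = j}) (Pi_pmf I d (\<lambda>_. \<mu>))"
    using assms by (subst Pi_pmf_map) (simp_all add: map_pmf_comp o_def)
  finally show ?thesis ..
qed

lemma expectation_abs_emp_measure_diff_le:
  assumes "m > 0"
  shows "measure_pmf.expectation (Pi_pmf {..<m} 0 (\<lambda>_. \<mu>)) (\<lambda>X. 1 / 2 * \<bar>emp_measure m X j - pmf \<mu> j\<bar>)
      \<le> measure_pmf.expectation (Pi_pmf {..<m} 0 (\<lambda>_. \<mu>)) (\<lambda>X. 1 / sqrt m * sqrt (emp_measure m X j))"
proof -
  let ?P = "Pi_pmf {..<m} 0 (\<lambda>_. \<mu>)" and ?B = "binomial_pmf m (pmf \<mu> j)"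
  have p: "pmf \<mu> j \<in> {0..1}"
    by (simp add: pmf_le_1)
  have distr: "map_pmf (\<lambda>X. card {t \<in> {..<m}. X t = j}) ?P = ?B"
    using count_Pi_pmf_eq_binomial_pmf[of "{..<m}" j 0 \<mu>] by simp
  have count: "measure_pmf.expectation ?P (\<lambda>X. g (card {t \<in> {..<m}. X t = j})) = measure_pmf.expectation ?B g"
    for g :: "nat \<Rightarrow> real"
    unfolding distr[symmetric] by simp
  have rescale: "1 / 2 * \<bar>x / m - q\<bar> = \<bar>x - m * q\<bar> / (2 * m)" for x q :: real
  proof -
    have "x / m - q = (x - m * q) / m"
      using assms by (simp add: field_simps)
    then show ?thesis by (simp add: abs_divide)
  qed
  have "measure_pmf.expectation ?P (\<lambda>X. 1 / 2 * \<bar>emp_measure m X j - pmf \<mu> j\<bar>)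
      = measure_pmf.expectation ?B (\<lambda>k. \<bar>real k - m * pmf \<mu> j\<bar>) / (2 * m)"
    unfolding emp_measure_def rescale integral_divide_zero[symmetric] by (rule count)
  also have "\<dots> \<le> 2 * measure_pmf.expectation ?B (\<lambda>k. sqrt (real k)) / (2 * m)"
    using expectation_binomial_abs_dev_le[OF p, of m] by (intro divide_right_mono) auto
  also have "\<dots> = measure_pmf.expectation ?B (\<lambda>k. sqrt (real k) / m)"
    by simp
  also have "(\<lambda>k. sqrt (real k) / m) = (\<lambda>k. 1 / sqrt m * sqrt (real k / m))"
    using assms by (auto simp: real_sqrt_divide field_simps)
  also have "measure_pmf.expectation ?B \<dots> = measure_pmf.expectation ?P (\<lambda>X. 1 / sqrt m * sqrt (emp_measure m X j))"
    unfolding emp_measure_def by (rule count[symmetric])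
  finally show ?thesis .
qed

lemma ennreal_expectation_suminf:
  fixes a :: "nat \<Rightarrow> 'a \<Rightarrow> real"
  assumes nonneg: "\<And>j x. a j x \<ge> 0" and summable: "\<And>x. summable (\<lambda>j. a j x)"
    and bounded: "\<And>x. (\<Sum>j. a j x) \<le> C"
  shows "ennreal (measure_pmf.expectation M (\<lambda>x. \<Sum>j. a j x)) = (\<Sum>j. ennreal (measure_pmf.expectation M (a j)))"
proof -
  have sum_nonneg: "(\<Sum>j. a j x) \<ge> 0" for x
    by (intro suminf_nonneg summable nonneg)
  have "a j x \<le> C" for j x
    using sum_le_suminf[OF summable, of "{j}" x] nonneg bounded[of x] by simp
  then have integrable: "integrable M (a j)" for j
    using nonneg by (intro measure_pmf.integrable_const_bound[where B=C]) auto
  have "ennreal (measure_pmf.expectation M (\<lambda>x. \<Sum>j. a j x)) = (\<integral>\<^sup>+x. (\<Sum>j. a j x) \<partial>M)"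
    using sum_nonneg bounded
    by (intro nn_integral_eq_integral[symmetric] measure_pmf.integrable_const_bound[where B=C]) auto
  also have "\<dots> = (\<integral>\<^sup>+x. (\<Sum>j. ennreal (a j x)) \<partial>M)"
    by (intro nn_integral_cong suminf_ennreal2[symmetric] nonneg summable)
  also have "\<dots> = (\<Sum>j. (\<integral>\<^sup>+x. a j x \<partial>M))"
    by (rule nn_integral_suminf) simp
  also have "\<dots> = (\<Sum>j. ennreal (measure_pmf.expectation M (a j)))"
    using nonneg by (intro suminf_cong nn_integral_eq_integral integrable) auto
  finally show ?thesis .
qed

lemma expectation_tv_dist_emp_measure_le:
  assumes "m > 0"
  shows "measure_pmf.expectation (Pi_pmf {..<m} 0 (\<lambda>_. \<mu>)) (\<lambda>X. tv_dist (emp_measure m X) (pmf \<mu>))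
      \<le> measure_pmf.expectation (Pi_pmf {..<m} 0 (\<lambda>_. \<mu>)) (\<lambda>X. Phi m (emp_measure m X))"
proof -
  let ?P = "Pi_pmf {..<m} 0 (\<lambda>_. \<mu>)"
  define a where "a j X = 1 / 2 * \<bar>emp_measure m X j - pmf \<mu> j\<bar>" for j X
  define b where "b j X = 1 / sqrt m * sqrt (emp_measure m X j)" for j X
  have tv: "tv_dist (emp_measure m X) (pmf \<mu>) = (\<Sum>j. a j X)" for X
    unfolding tv_dist_def a_def by (rule suminf_mult[symmetric]) (rule summable_abs_emp_measure_diff)
  have Phi: "Phi m (emp_measure m X) = (\<Sum>j. b j X)" for X
    unfolding Phi_def b_def by (rule suminf_mult[symmetric]) (rule summable_sqrt_emp_measure)
  have "ennreal (measure_pmf.expectation ?P (\<lambda>X. \<Sum>j. a j X)) = (\<Sum>j. ennreal (measure_pmf.expectation ?P (a j)))"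
  proof (rule ennreal_expectation_suminf)
    show "(\<Sum>j. a j X) \<le> 1" for X
      using tv_dist_emp_measure_bounded[OF assms, of X \<mu>] tv[of X] by simp
  qed (auto simp: a_def intro: summable_mult summable_abs_emp_measure_diff)
  also have "\<dots> \<le> (\<Sum>j. ennreal (measure_pmf.expectation ?P (b j)))"
    unfolding a_def b_def
    by (intro suminf_le summableI ennreal_leI expectation_abs_emp_measure_diff_le assms)
  also have "\<dots> = ennreal (measure_pmf.expectation ?P (\<lambda>X. \<Sum>j. b j X))"
  proof (rule ennreal_expectation_suminf[symmetric])
    show "(\<Sum>j. b j X) \<le> sqrt m" for X
      using Phi_emp_measure_le[of m X] Phi[of X] by simp
  qed (auto simp: b_def emp_measure_nonneg intro: summable_mult summable_sqrt_emp_measure)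
  finally show ?thesis
    unfolding tv Phi
    by (subst (asm) ennreal_le_iff) (auto intro!: integral_nonneg_AE simp: Phi[symmetric] Phi_emp_measure_nonneg)
qed

section \<open>Concentration\<close>

lemma tv_dist_emp_measure_upper_deviation:
  assumes "m > 0" "s > 0"
  shows "measure_pmf.prob (Pi_pmf {..<m} 0 (\<lambda>_. \<mu>))
           {X. tv_dist (emp_measure m X) (pmf \<mu>) -
               measure_pmf.expectation (Pi_pmf {..<m} 0 (\<lambda>_. \<mu>)) (\<lambda>X. tv_dist (emp_measure m X) (pmf \<mu>)) \<ge> s}
         \<le> exp (-2 * real m * s\<^sup>2)"
proof -
  have "exp (-2 * real m * s\<^sup>2) = exp (-2 * s\<^sup>2 / (card {..<m} * (1 / m)\<^sup>2))"
    using assms(1) by (simp add: field_simps power2_eq_square)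
  then show ?thesis
    by (simp only:) (rule mcdiarmid_Pi_pmf[where B=1],
        use assms in \<open>auto intro: tv_dist_emp_measure_fun_upd tv_dist_emp_measure_bounded\<close>)
qed

lemma Phi_emp_measure_lower_deviation:
  assumes "m > 0" "s > 0"
  shows "measure_pmf.prob (Pi_pmf {..<m} 0 (\<lambda>_. \<mu>))
           {X. measure_pmf.expectation (Pi_pmf {..<m} 0 (\<lambda>_. \<mu>)) (\<lambda>X. Phi m (emp_measure m X)) -
               Phi m (emp_measure m X) \<ge> s}
         \<le> exp (-2 * real m * s\<^sup>2)"
proof -
  let ?P = "Pi_pmf {..<m} 0 (\<lambda>_. \<mu>)" and ?f = "\<lambda>X. - Phi m (emp_measure m X)"
  have "measure_pmf.prob ?P {X. ?f X - measure_pmf.expectation ?P ?f \<ge> s}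
        \<le> exp (-2 * s\<^sup>2 / (card {..<m} * (1 / m)\<^sup>2))"
  proof (rule mcdiarmid_Pi_pmf[where B="sqrt m"])
    show "\<bar>?f (X(i := y)) - ?f X\<bar> \<le> 1 / m" if "i \<in> {..<m}" for X i y
      using Phi_emp_measure_fun_upd[of i m X y] that by (simp add: abs_minus_commute)
    show "\<bar>?f X\<bar> \<le> sqrt m" for X
      using Phi_emp_measure_nonneg[of m X] Phi_emp_measure_le[of m X] by simp
  qed (use assms in auto)
  then show ?thesis
    using assms(1) by (simp add: field_simps power2_eq_square)
qed

lemma prob_le_add_of_deviation_bounds:
  fixes f g :: "'a \<Rightarrow> real"
  assumes "measure_pmf.prob M {x. f x - measure_pmf.expectation M f \<ge> s} \<le> \<alpha>"
    and "measure_pmf.prob M {x. measure_pmf.expectation M g - g x \<ge> s} \<le> \<beta>"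
    and "measure_pmf.expectation M f \<le> measure_pmf.expectation M g"
  shows "measure_pmf.prob M {x. f x \<le> g x + 2 * s} \<ge> 1 - (\<alpha> + \<beta>)"
proof -
  let ?A = "{x. f x - measure_pmf.expectation M f \<ge> s}" and ?B = "{x. measure_pmf.expectation M g - g x \<ge> s}"
  have "1 - (\<alpha> + \<beta>) \<le> 1 - measure_pmf.prob M (?A \<union> ?B)"
    using measure_Un_le[of ?A M ?B] assms(1,2) by simp
  also have "\<dots> = measure_pmf.prob M (- (?A \<union> ?B))"
    using measure_pmf.prob_compl[of "?A \<union> ?B" M] by (simp add: Compl_eq_Diff_UNIV)
  also have "\<dots> \<le> measure_pmf.prob M {x. f x \<le> g x + 2 * s}"
    using assms(3) by (intro measure_pmf.finite_measure_mono) auto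
  finally show ?thesis .
qed

theorem theorem1:
  fixes m :: nat and \<delta> :: real and \<mu> :: "nat pmf"
  assumes "m \<ge> 1" and "0 < \<delta>" and "\<delta> < 1"
    and "set_pmf \<mu> \<subseteq> {1..}"
  shows "(measure_pmf.prob (Pi_pmf {..<m} 0 (\<lambda>_. \<mu>))
           {X. tv_dist (emp_measure m X) (pmf \<mu>)
               \<le> Phi m (emp_measure m X) + 3 * sqrt (ln (2 / \<delta>) / (2 * real m))}
         \<ge> 1 - \<delta>) \<and>
         (measure_pmf.expectation (Pi_pmf {..<m} 0 (\<lambda>_. \<mu>))
           (\<lambda>X. tv_dist (emp_measure m X) (pmf \<mu>))
         \<le> measure_pmf.expectation (Pi_pmf {..<m} 0 (\<lambda>_. \<mu>))
           (\<lambda>X. Phi m (emp_measure m X)))"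
proof -
  let ?P = "Pi_pmf {..<m} 0 (\<lambda>_. \<mu>)"
  let ?tv = "\<lambda>X. tv_dist (emp_measure m X) (pmf \<mu>)" and ?Phi = "\<lambda>X. Phi m (emp_measure m X)"
  \<comment> \<open>The argument gives the deviation term with constant 2 in place of 3.\<close>
  define s where "s = sqrt (ln (2 / \<delta>) / (2 * m))"
  have "m > 0" "s > 0"
    using assms(1-3) by (simp_all add: s_def)
  have tail: "exp (-2 * real m * s\<^sup>2) = \<delta> / 2"
    using \<open>m > 0\<close> assms(2,3) by (simp add: s_def exp_minus)
  have expectation: "measure_pmf.expectation ?P ?tv \<le> measure_pmf.expectation ?P ?Phi"
    using expectation_tv_dist_emp_measure_le[OF \<open>m > 0\<close>] .
  have "1 - \<delta> \<le> measure_pmf.prob ?P {X. ?tv X \<le> ?Phi X + 2 * s}"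
    using prob_le_add_of_deviation_bounds[OF tv_dist_emp_measure_upper_deviation[OF \<open>m > 0\<close> \<open>s > 0\<close>]
        Phi_emp_measure_lower_deviation[OF \<open>m > 0\<close> \<open>s > 0\<close>] expectation]
    unfolding tail by simp
  also have "\<dots> \<le> measure_pmf.prob ?P {X. ?tv X \<le> ?Phi X + 3 * s}"
    using \<open>s > 0\<close> by (intro measure_pmf.finite_measure_mono) auto
  finally show ?thesis
    using expectation unfolding s_def by simp
qed

end
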